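(* Let $r\geq3$ be fixed and $\gamma_{n,r}=\sqrt{(r-2)(n-r+2)}$. For each sufficiently large $n$, let $G$ be an $n$-vertex $K_r$-minor free graph with maximum spread, and let $L$ be a set of $r-2$ vertices of $G$ such that every vertex of $L$ is adjacent to every vertex of $V(G)\setminus L$ and $V(G)\setminus L$ is independent (such a set exists for $n$ large). Let $A_L$ be the adjacency matrix of $G[L]$, $\ell_1=\mathbf 1^{\mathrm T}A_L\mathbf 1$ and $\ell_2=\mathbf 1^{\mathrm T}A_L^2\mathbf 1$. Then \[ s(G)=2\gamma_{n,r}+\frac{1}{r-2}\Big(-\frac{3}{4(r-2)}\ell_1^2+\ell_2\Big)\frac{1}{\gamma_{n,r}}+O\Big(\frac{1}{\gamma_{n,r}^3}\Big). \]
   Context: $s(G)=\lambda_1(G)-\lambda_n(G)$ is the spread (difference of largest and smallest adjacency eigenvalues). $\mathbf 1$ is the all-ones vector. Implicit constants depend only on $r$. *)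

theory Defs
  imports Complex_Main
begin

definition simple_graph :: "nat \<Rightarrow> (nat \<Rightarrow> nat \<Rightarrow> bool) \<Rightarrow> bool" where
  "simple_graph n E \<longleftrightarrow> (\<forall>i j. E i j \<longrightarrow> i < n \<and> j < n) \<and> (\<forall>i j. E i j \<longrightarrow> E j i) \<and> (\<forall>i. \<not> E i i)"

definition connected_set :: "(nat \<Rightarrow> nat \<Rightarrow> bool) \<Rightarrow> nat set \<Rightarrow> bool" where
  "connected_set E S \<longleftrightarrow> S \<noteq> {} \<and>
     (\<forall>u\<in>S. \<forall>v\<in>S. (\<lambda>x y. x \<in> S \<and> y \<in> S \<and> E x y)\<^sup>*\<^sup>* u v)"

definition has_K_minor :: "nat \<Rightarrow> (nat \<Rightarrow> nat \<Rightarrow> bool) \<Rightarrow> nat \<Rightarrow> bool" where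
  "has_K_minor n E r \<longleftrightarrow> (\<exists>B :: nat \<Rightarrow> nat set.
     (\<forall>i<r. B i \<subseteq> {0..<n} \<and> connected_set E (B i)) \<and>
     (\<forall>i<r. \<forall>j<r. i \<noteq> j \<longrightarrow> B i \<inter> B j = {} \<and> (\<exists>u\<in>B i. \<exists>v\<in>B j. E u v)))"

definition adj :: "(nat \<Rightarrow> nat \<Rightarrow> bool) \<Rightarrow> nat \<Rightarrow> nat \<Rightarrow> real" where
  "adj E i j = (if E i j then 1 else 0)"

definition is_eigenvalue :: "nat \<Rightarrow> (nat \<Rightarrow> nat \<Rightarrow> real) \<Rightarrow> real \<Rightarrow> bool" where
  "is_eigenvalue n A x \<longleftrightarrow> (\<exists>v :: nat \<Rightarrow> real. (\<exists>i<n. v i \<noteq> 0) \<and>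
     (\<forall>i<n. (\<Sum>j<n. A i j * v j) = x * v i))"

definition spread :: "nat \<Rightarrow> (nat \<Rightarrow> nat \<Rightarrow> bool) \<Rightarrow> real" where
  "spread n E = Max {x. is_eigenvalue n (adj E) x} - Min {x. is_eigenvalue n (adj E) x}"

definition gamma_nr :: "nat \<Rightarrow> nat \<Rightarrow> real" where
  "gamma_nr n r = sqrt ((real r - 2) * (real n - real r + 2))"

definition ell1 :: "(nat \<Rightarrow> nat \<Rightarrow> bool) \<Rightarrow> nat set \<Rightarrow> real" where
  "ell1 E L = (\<Sum>i\<in>L. \<Sum>j\<in>L. adj E i j)"

definition ell2 :: "(nat \<Rightarrow> nat \<Rightarrow> bool) \<Rightarrow> nat set \<Rightarrow> real" where
  "ell2 E L = (\<Sum>i\<in>L. \<Sum>j\<in>L. \<Sum>k\<in>L. adj E i k * adj E k j)"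

end

(*
  G is the join of G[L] (k = r - 2 vertices, adjacency matrix A) with an independent set of
  m = n - k vertices. An eigenvalue with |lam| > k is constant on the independent part, and
  eliminating that part shows that such lam are exactly the solutions of
  lam = m * 1^T (lam - A)^-1 1. Expanding the resolvent as the sum of c_j / lam^(j+1) with
  c_j = 1^T A^j 1, and rescaling lam = g w, z = 1/g with g = sqrt (k m) = gamma, turns this into
  w^5 - w^3 - b1 z w^2 - b2 z^2 w - b3 z^3 = O(z^4), b_j = c_j / k. This quintic is a small
  perturbation of w^5 - w^3, whose root w = 1 is simple; its perturbed root is
  W(z) + O(z^4) with W(z) = 1 + b1 z/2 + (b2/2 - 3 b1^2/8) z^2 + e3 z^3, and a sign change of
  the quintic across a window of width O(z^4) around W(z) places the largest eigenvalue at
  g W(1/g) + O(g^-3). Since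
  the quintic is odd in (w, z), the smallest eigenvalue is -g W(-1/g) + O(g^-3), and in the sum
  the odd powers of 1/g cancel: s(G) = 2 g + (b2 - 3 b1^2/4) / g + O(g^-3).
*)
theory Submission
  imports Defs "Jordan_Normal_Form.Char_Poly" "HOL-Analysis.Lipschitz"
begin

lemma finite_eigenvalues: "finite {x. is_eigenvalue n M x}"
proof -
  let ?A = "Matrix.mat n n (\<lambda>(i, j). M i j)"
  have A: "?A \<in> carrier_mat n n" by simp
  have "{x. is_eigenvalue n M x} \<subseteq> {x. poly (char_poly ?A) x = 0}"
  proof
    fix x assume "x \<in> {x. is_eigenvalue n M x}"
    then obtain v where v: "\<exists>i<n. v i \<noteq> 0" "\<forall>i<n. (\<Sum>j<n. M i j * v j) = x * v i"
      unfolding is_eigenvalue_def by auto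
    have "Matrix.vec n v \<noteq> 0\<^sub>v n"
      using v(1) by (metis index_vec index_zero_vec(1))
    moreover have "?A *\<^sub>v Matrix.vec n v = x \<cdot>\<^sub>v Matrix.vec n v"
      using v(2) by (intro eq_vecI) (auto simp: scalar_prod_def atLeast0LessThan)
    ultimately have "eigenvalue ?A x"
      unfolding eigenvalue_def eigenvector_def by (intro exI[of _ "Matrix.vec n v"]) auto
    then show "x \<in> {x. poly (char_poly ?A) x = 0}" using eigenvalue_root_char_poly[OF A] by simp
  qed
  moreover have "char_poly ?A \<noteq> 0" using degree_monic_char_poly[OF A] by (metis coeff_0 zero_neq_one)
  ultimately show ?thesis using poly_roots_finite finite_subset by blast
qed

lemma bounded_on_box:
  fixes f :: "real \<Rightarrow> real \<Rightarrow> real \<Rightarrow> real \<Rightarrow> real"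
  assumes "continuous_on UNIV (\<lambda>(a, b, c, d). f a b c d)"
  shows "\<exists>M. \<forall>a b c d. \<bar>a\<bar> \<le> A \<longrightarrow> \<bar>b\<bar> \<le> B \<longrightarrow> \<bar>c\<bar> \<le> C \<longrightarrow> \<bar>d\<bar> \<le> D \<longrightarrow> \<bar>f a b c d\<bar> \<le> M"
proof -
  define S where "S = {-A..A} \<times> {-B..B} \<times> {-C..C} \<times> {-D..D}"
  have "compact S" unfolding S_def by (intro compact_Times compact_Icc)
  then have "compact ((\<lambda>(a, b, c, d). f a b c d) ` S)"
    by (rule compact_continuous_image[OF continuous_on_subset[OF assms subset_UNIV]])
  then obtain M where "\<forall>x\<in>(\<lambda>(a, b, c, d). f a b c d) ` S. norm x \<le> M"
    using compact_imp_bounded bounded_iff by metis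
  then show ?thesis unfolding S_def by (intro exI[of _ M]) (auto simp: abs_le_iff)
qed

section \<open>The rescaled eigenvalue equation\<close>

text \<open>With \<open>w = lam / g\<close> and \<open>z = 1 / g\<close>, the eigenvalue equation reads
  \<open>quintic b1 b2 b3 w z = O(z^4)\<close> (lemma \<open>quintic_approx\<close> below).\<close>
definition quintic :: "real \<Rightarrow> real \<Rightarrow> real \<Rightarrow> real \<Rightarrow> real \<Rightarrow> real" where
  "quintic b1 b2 b3 w z = w^5 - w^3 - b1*z*w^2 - b2*z^2*w - b3*z^3"

text \<open>The root of \<open>quintic b1 b2 b3 w z = 0\<close> near \<open>w = 1\<close>, expanded to order \<open>z^3\<close>.\<close>
definition quintic_root :: "real \<Rightarrow> real \<Rightarrow> real \<Rightarrow> real \<Rightarrow> real" where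
  "quintic_root b1 b2 b3 z =
     1 + b1/2 * z + (b2/2 - 3*b1^2/8) * z^2 + (b3/2 + b1^3/2 - b1*b2) * z^3"

definition quintic_residual :: "real \<Rightarrow> real \<Rightarrow> real \<Rightarrow> real \<Rightarrow> real" where
  "quintic_residual b1 b2 b3 z =
     (let e1 = b1/2; e2 = b2/2 - 3*b1^2/8; e3 = b3/2 + b1^3/2 - b1*b2;
          U = e2 + e3*z; V = e1 + z*U
      in 5*b1*e3 + 9*U*(V^2 + V*e1 + e1^2) - b1*U*(V + e1) - b2*U + 7*U^2 + 5*V^4 + z*V^5)"

lemma quintic_at_root: "quintic b1 b2 b3 (quintic_root b1 b2 b3 z) z = z^4 * quintic_residual b1 b2 b3 z"
proof -
  define e1 where "e1 = b1/2"
  define e2 where "e2 = b2/2 - 3*b1^2/8"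
  define e3 where "e3 = b3/2 + b1^3/2 - b1*b2"
  define U where "U = e2 + e3*z"
  define V where "V = e1 + z*U"
  have root: "quintic_root b1 b2 b3 z = 1 + z*V"
    unfolding quintic_root_def V_def U_def e1_def e2_def e3_def by (simp add: algebra_simps power2_eq_square power3_eq_cube)
  have "quintic b1 b2 b3 (1 + z*V) z = z*(2*V - b1) + z^2*(7*V^2 - 2*b1*V - b2)
      + z^3*(9*V^3 - b1*V^2 - b2*V - b3) + z^4*(5*V^4 + z*V^5)"
    unfolding quintic_def by Groebner_Basis.algebra
  also have "2*V - b1 = 2*z*U"
    unfolding V_def e1_def by simp
  also have "7*V^2 - 2*b1*V - b2 = -2*U + z*(2*e3 + 5*b1*U + 7*z*U^2)"
    unfolding V_def U_def e1_def e2_def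
    by (simp add: field_simps power2_eq_square power3_eq_cube; simp add: algebra_simps)
  also have "9*V^3 - b1*V^2 - b2*V - b3 = -2*e3 - 5*b1*U
      + z*(5*b1*e3 + 9*U*(V^2 + V*e1 + e1^2) - b1*U*(V + e1) - b2*U)"
    unfolding V_def U_def e1_def e2_def e3_def
    by (simp add: field_simps power2_eq_square power3_eq_cube; simp add: algebra_simps)
  finally show ?thesis
    unfolding root quintic_residual_def Let_def
      e1_def[symmetric] e2_def[symmetric] e3_def[symmetric] U_def[symmetric] V_def[symmetric]
    by Groebner_Basis.algebra
qed

lemma quintic_odd: "quintic b1 b2 b3 (-w) (-z) = - quintic b1 b2 b3 w z"
  unfolding quintic_def by Groebner_Basis.algebra

lemma quintic_root_even: "quintic_root b1 b2 b3 z + quintic_root b1 b2 b3 (-z) = 2 + (b2 - 3/4*b1^2) * z^2"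
  unfolding quintic_root_def by (simp add: power2_eq_square power3_eq_cube algebra_simps)

lemma quintic_expansion_identity:
  fixes g k lam m a1 a2 a3 S :: real
  assumes "g \<noteq> 0" "k \<noteq> 0" "lam \<noteq> 0" "g^2 = k * m"
  shows "lam^4 * (lam - m * (k/lam + a1/lam^2 + a2/lam^3 + a3/lam^4 + S/lam^4)) / g^5
       = quintic (a1/k) (a2/k) (a3/k) (lam/g) (1/g) - S / k / g^3"
proof -
  have m: "m = g^2 / k" using assms by (simp add: field_simps)
  have e: "lam^4 * (lam - m * (k/lam + a1/lam^2 + a2/lam^3 + a3/lam^4 + S/lam^4))
      = lam^5 - g^2 / k * (k * lam^3 + a1 * lam^2 + a2 * lam + a3 + S)"
    unfolding m using assms(2,3) by (simp add: field_simps eval_nat_numeral)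
  show ?thesis
    unfolding e quintic_def using assms(1,2) by (simp add: field_simps eval_nat_numeral)
qed

lemma quintic_sign_flip:
  assumes "\<bar>s\<bar> = 1"
  shows "quintic b1 b2 b3 (s * w) (s * z) = s * quintic b1 b2 b3 w z"
  using assms quintic_odd[of b1 b2 b3 w z] by (auto simp: abs_eq_iff')

definition quintic_slope :: "real \<Rightarrow> real \<Rightarrow> real \<Rightarrow> real \<Rightarrow> real \<Rightarrow> real" where
  "quintic_slope b1 b2 u w z =
     u^4 + u^3*w + u^2*w^2 + u*w^3 + w^4 - (u^2 + u*w + w^2) - b1*z*(u + w) - b2*z^2"

lemma quintic_diff: "quintic b1 b2 b3 u z - quintic b1 b2 b3 w z = (u - w) * quintic_slope b1 b2 u w z"
  unfolding quintic_def quintic_slope_def by Groebner_Basis.algebra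

lemma monomial_lower:
  fixes c u w :: real
  assumes "0 \<le> c" "c \<le> u" "c \<le> w"
  shows "c^(i + j) \<le> u^i * w^j"
  unfolding power_add using assms by (intro mult_mono power_mono) auto

lemma quintic_slope_ge:
  assumes u: "\<bar>u - 1\<bar> \<le> 1/20" and w: "\<bar>w - 1\<bar> \<le> 1/20"
    and b1: "\<bar>b1 * z\<bar> \<le> 1/20" and b2: "\<bar>b2 * z^2\<bar> \<le> 1/400"
  shows "1/2 \<le> quintic_slope b1 b2 u w z"
proof -
  have u': "19/20 \<le> u" "u \<le> 21/20" and w': "19/20 \<le> w" "w \<le> 21/20"
    using abs_le_D1[OF u] abs_le_D2[OF u] abs_le_D1[OF w] abs_le_D2[OF w] by linarith+
  have "(19/20)^4 \<le> u^4" "(19/20)^4 \<le> u^3*w" "(19/20)^4 \<le> u^2*w^2" "(19/20)^4 \<le> u*w^3"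
    "(19/20)^4 \<le> w^4"
    using monomial_lower[of "19/20" u w 4 0] monomial_lower[of "19/20" u w 3 1]
      monomial_lower[of "19/20" u w 2 2] monomial_lower[of "19/20" u w 1 3]
      monomial_lower[of "19/20" u w 0 4] u' w' by simp_all
  moreover have "u^2 \<le> (21/20)^2" "w^2 \<le> (21/20)^2"
    using u' w' by (intro power_mono; simp)+
  moreover have "u*w \<le> (21/20)^2"
    using u' w' unfolding power2_eq_square by (intro mult_mono) auto
  moreover have "\<bar>b1*z*(u + w)\<bar> \<le> 1/20 * (21/10)"
    unfolding abs_mult[of "b1*z"] using b1 u' w' by (intro mult_mono) auto
  ultimately show ?thesis
    unfolding quintic_slope_def using abs_le_D1[OF b2] abs_ge_self[of "b1*z*(u + w)"]
    by (simp add: power_divide)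
qed

lemma quintic_gap:
  assumes "\<bar>u - 1\<bar> \<le> 1/20" "\<bar>w - 1\<bar> \<le> 1/20" "\<bar>b1 * z\<bar> \<le> 1/20" "\<bar>b2 * z^2\<bar> \<le> 1/400"
  shows "\<bar>u - w\<bar> / 2 \<le> \<bar>quintic b1 b2 b3 u z - quintic b1 b2 b3 w z\<bar>"
    and "w \<le> u \<Longrightarrow> (u - w) / 2 \<le> quintic b1 b2 b3 u z - quintic b1 b2 b3 w z"
proof -
  have slope: "1/2 \<le> quintic_slope b1 b2 u w z" by (rule quintic_slope_ge[OF assms])
  show "\<bar>u - w\<bar> / 2 \<le> \<bar>quintic b1 b2 b3 u z - quintic b1 b2 b3 w z\<bar>"
    using mult_left_mono[OF slope, of "\<bar>u - w\<bar>"] slope by (simp add: quintic_diff abs_mult)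
  show "(u - w) / 2 \<le> quintic b1 b2 b3 u z - quintic b1 b2 b3 w z" if "w \<le> u"
    using mult_left_mono[OF slope, of "u - w"] that by (simp add: quintic_diff)
qed

definition root_window :: "real \<Rightarrow> real \<Rightarrow> real \<Rightarrow> real \<Rightarrow> real \<Rightarrow> real \<Rightarrow> bool" where
  "root_window b1 b2 b3 C D z \<longleftrightarrow>
     0 \<le> D \<and> \<bar>quintic_root b1 b2 b3 z - 1\<bar> + D * z^4 \<le> 1/20 \<and>
     (\<forall>u. \<bar>u - 1\<bar> \<le> 1/20 \<longrightarrow> \<bar>quintic b1 b2 b3 u z\<bar> \<le> C * z^4 \<longrightarrow>
        \<bar>u - quintic_root b1 b2 b3 z\<bar> \<le> D * z^4) \<and>
     quintic b1 b2 b3 (quintic_root b1 b2 b3 z - D * z^4) z < - (C * z^4) \<and>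
     C * z^4 < quintic b1 b2 b3 (quintic_root b1 b2 b3 z + D * z^4) z"

lemma root_windowI:
  assumes b1: "\<bar>b1 * z\<bar> \<le> 1/20" and b2: "\<bar>b2 * z^2\<bar> \<le> 1/400" and "z \<noteq> 0"
    and C: "0 \<le> C" and C0: "0 \<le> C0"
    and at_root: "\<bar>quintic b1 b2 b3 (quintic_root b1 b2 b3 z) z\<bar> \<le> C0 * z^4"
    and window: "\<bar>quintic_root b1 b2 b3 z - 1\<bar> + 2 * (C0 + C + 1) * z^4 \<le> 1/20"
  shows "root_window b1 b2 b3 C (2 * (C0 + C + 1)) z"
proof -
  let ?W = "quintic_root b1 b2 b3 z" and ?D = "2 * (C0 + C + 1)"
  have z4: "0 < z^4" using \<open>z \<noteq> 0\<close> by simp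
  have Dz: "0 \<le> ?D * z^4" using C C0 z4 by simp
  moreover have "19/20 + ?D * z^4 \<le> ?W" "?W + ?D * z^4 \<le> 21/20"
    using window abs_ge_self[of "?W - 1"] abs_ge_minus_self[of "?W - 1"] by linarith+
  ultimately have W: "\<bar>?W - 1\<bar> \<le> 1/20" and up: "\<bar>?W + ?D * z^4 - 1\<bar> \<le> 1/20"
    and down: "\<bar>?W - ?D * z^4 - 1\<bar> \<le> 1/20"
    unfolding abs_le_iff by (intro conjI; linarith)+
  have "\<bar>u - ?W\<bar> \<le> ?D * z^4"
    if u: "\<bar>u - 1\<bar> \<le> 1/20" and small: "\<bar>quintic b1 b2 b3 u z\<bar> \<le> C * z^4" for u
  proof -
    have "\<bar>u - ?W\<bar> / 2 \<le> \<bar>quintic b1 b2 b3 u z - quintic b1 b2 b3 ?W z\<bar>"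
      by (rule quintic_gap(1)[OF u W b1 b2])
    also have "\<dots> \<le> C * z^4 + C0 * z^4"
      using abs_triangle_ineq4[of "quintic b1 b2 b3 u z" "quintic b1 b2 b3 ?W z"] small at_root
      by linarith
    finally have "\<bar>u - ?W\<bar> \<le> 2 * (C * z^4 + C0 * z^4)" by simp
    also have "\<dots> \<le> ?D * z^4" using z4 by (simp add: algebra_simps)
    finally show ?thesis .
  qed
  moreover have "C * z^4 < quintic b1 b2 b3 (?W + ?D * z^4) z"
    and "quintic b1 b2 b3 (?W - ?D * z^4) z < - (C * z^4)"
  proof -
    have half: "?D * z^4 / 2 = C0 * z^4 + C * z^4 + z^4" by (simp add: algebra_simps)
    have le: "?W \<le> ?W + ?D * z^4" "?W - ?D * z^4 \<le> ?W" using Dz by simp_all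
    have "?D * z^4 / 2 \<le> quintic b1 b2 b3 (?W + ?D * z^4) z - quintic b1 b2 b3 ?W z"
      using quintic_gap(2)[of _ _ _ _ _ b3, OF up W b1 b2 le(1)] by simp
    then have "C * z^4 + z^4 \<le> quintic b1 b2 b3 (?W + ?D * z^4) z"
      using half abs_le_D2[OF at_root] by linarith
    then show "C * z^4 < quintic b1 b2 b3 (?W + ?D * z^4) z" using z4 by linarith
    have "?D * z^4 / 2 \<le> quintic b1 b2 b3 ?W z - quintic b1 b2 b3 (?W - ?D * z^4) z"
      using quintic_gap(2)[of _ _ _ _ _ b3, OF W down b1 b2 le(2)] by simp
    then have "quintic b1 b2 b3 (?W - ?D * z^4) z + z^4 \<le> - (C * z^4)"
      using half abs_le_D1[OF at_root] by linarith
    then show "quintic b1 b2 b3 (?W - ?D * z^4) z < - (C * z^4)" using z4 by linarith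
  qed
  moreover have "0 \<le> ?D" using C C0 by simp
  ultimately show ?thesis unfolding root_window_def using window by blast
qed

lemma root_window_exists:
  assumes K: "1 \<le> K" and C: "0 \<le> C"
  shows "\<exists>D z0. 0 < z0 \<and> (\<forall>b1 b2 b3 z. \<bar>b1\<bar> \<le> K \<longrightarrow> \<bar>b2\<bar> \<le> K^2 \<longrightarrow> \<bar>b3\<bar> \<le> K^3 \<longrightarrow>
     z \<noteq> 0 \<longrightarrow> \<bar>z\<bar> \<le> z0 \<longrightarrow> root_window b1 b2 b3 C D z)"
proof -
  have "continuous_on UNIV (\<lambda>(b1, b2, b3, z). quintic_residual b1 b2 b3 z)"
    unfolding quintic_residual_def Let_def case_prod_unfold by (intro continuous_intros) auto
  then obtain C0 where C0: "\<And>b1 b2 b3 z. \<bar>b1\<bar> \<le> K \<Longrightarrow> \<bar>b2\<bar> \<le> K^2 \<Longrightarrow> \<bar>b3\<bar> \<le> K^3 \<Longrightarrow> \<bar>z\<bar> \<le> 1 \<Longrightarrow>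
      \<bar>quintic_residual b1 b2 b3 z\<bar> \<le> C0"
    using bounded_on_box by blast
  define dW where "dW b1 b2 b3 z = b1/2 + (b2/2 - 3*b1^2/8) * z + (b3/2 + b1^3/2 - b1*b2) * z^2"
    for b1 b2 b3 z :: real
  have "continuous_on UNIV (\<lambda>(b1, b2, b3, z). dW b1 b2 b3 z)"
    unfolding dW_def case_prod_unfold by (intro continuous_intros) auto
  then obtain CW where CW: "\<And>b1 b2 b3 z. \<bar>b1\<bar> \<le> K \<Longrightarrow> \<bar>b2\<bar> \<le> K^2 \<Longrightarrow> \<bar>b3\<bar> \<le> K^3 \<Longrightarrow> \<bar>z\<bar> \<le> 1 \<Longrightarrow>
      \<bar>dW b1 b2 b3 z\<bar> \<le> CW"
    using bounded_on_box by blast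
  have C0_nonneg: "0 \<le> C0" and CW_nonneg: "0 \<le> CW"
    using C0[of 0 0 0 0] CW[of 0 0 0 0] K by auto
  define D where "D = 2 * (C0 + C + 1)"
  have D_nonneg: "0 \<le> D" unfolding D_def using C C0_nonneg by simp
  define z0 where "z0 = 1 / (20 * K * (CW + D + 1))"
  have z0: "0 < z0" "z0 * (CW + D + 1) = 1 / (20 * K)"
    using K C C0_nonneg CW_nonneg unfolding z0_def D_def by auto
  have "root_window b1 b2 b3 C D z"
    if b: "\<bar>b1\<bar> \<le> K" "\<bar>b2\<bar> \<le> K^2" "\<bar>b3\<bar> \<le> K^3" and z: "z \<noteq> 0" "\<bar>z\<bar> \<le> z0" for b1 b2 b3 z
  proof -
    have zK: "\<bar>z\<bar> \<le> 1 / (20 * K)"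
      using z(2) z0 C C0_nonneg CW_nonneg mult_left_mono[of 1 "CW + D + 1" z0]
      unfolding D_def by auto
    moreover have "1 / (20 * K) \<le> 1" using K by simp
    ultimately have z1: "\<bar>z\<bar> \<le> 1" by linarith
    have "\<bar>b1 * z\<bar> \<le> K * (1 / (20 * K))"
      unfolding abs_mult using b(1) zK by (intro mult_mono) auto
    then have b1z: "\<bar>b1 * z\<bar> \<le> 1/20" using K by simp
    have "\<bar>b2 * z^2\<bar> \<le> K^2 * (1 / (20 * K))^2"
      unfolding abs_mult power_abs using b(2) zK by (intro mult_mono power_mono) auto
    then have b2z: "\<bar>b2 * z^2\<bar> \<le> 1/400" using K by (simp add: power_divide)
    have z4: "z^4 \<le> \<bar>z\<bar>"
      using power_decreasing[of 1 4 "\<bar>z\<bar>"] z1 by (simp add: power_abs)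
    have "\<bar>quintic_root b1 b2 b3 z - 1\<bar> = \<bar>z\<bar> * \<bar>dW b1 b2 b3 z\<bar>"
      unfolding quintic_root_def dW_def abs_mult[symmetric]
      by (simp add: algebra_simps power2_eq_square power3_eq_cube)
    also have "\<dots> \<le> CW * \<bar>z\<bar>"
      using mult_left_mono[OF CW[OF b z1] abs_ge_zero[of z]] by (simp add: mult.commute)
    finally have "\<bar>quintic_root b1 b2 b3 z - 1\<bar> + D * z^4 \<le> CW * \<bar>z\<bar> + D * \<bar>z\<bar>"
      using mult_left_mono[OF z4 D_nonneg] by (rule add_mono)
    also have "\<dots> \<le> (CW + D + 1) * \<bar>z\<bar>" by (simp add: algebra_simps)
    also have "\<dots> \<le> (CW + D + 1) * z0"
      using z(2) CW_nonneg D_nonneg by (intro mult_left_mono) auto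
    also have "\<dots> \<le> 1/20" using z0(2) K by (simp add: mult.commute)
    finally have window: "\<bar>quintic_root b1 b2 b3 z - 1\<bar> + D * z^4 \<le> 1/20" .
    have "\<bar>quintic b1 b2 b3 (quintic_root b1 b2 b3 z) z\<bar> = z^4 * \<bar>quintic_residual b1 b2 b3 z\<bar>"
      by (simp add: quintic_at_root abs_mult)
    also have "\<dots> \<le> z^4 * C0" using C0[OF b z1] by (intro mult_left_mono) auto
    finally have "\<bar>quintic b1 b2 b3 (quintic_root b1 b2 b3 z) z\<bar> \<le> C0 * z^4"
      by (simp add: mult.commute)
    then show ?thesis
      unfolding D_def by (rule root_windowI[OF b1z b2z z(1) C C0_nonneg _ window[unfolded D_def]])
  qed
  then show ?thesis using z0 by blast
qed

section \<open>Walks in \<open>G[L]\<close> and the resolvent equation\<close>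

definition adj_mult :: "(nat \<Rightarrow> nat \<Rightarrow> bool) \<Rightarrow> nat set \<Rightarrow> (nat \<Rightarrow> real) \<Rightarrow> nat \<Rightarrow> real" where
  "adj_mult E L y u = (\<Sum>v\<in>L. adj E u v * y v)"

definition walks_from :: "(nat \<Rightarrow> nat \<Rightarrow> bool) \<Rightarrow> nat set \<Rightarrow> nat \<Rightarrow> nat \<Rightarrow> real" where
  "walks_from E L j = (adj_mult E L ^^ j) (\<lambda>_. 1)"

definition walk_count :: "(nat \<Rightarrow> nat \<Rightarrow> bool) \<Rightarrow> nat set \<Rightarrow> nat \<Rightarrow> real" where
  "walk_count E L j = (\<Sum>u\<in>L. walks_from E L j u)"

lemma walks_from_0 [simp]: "walks_from E L 0 u = 1"
  unfolding walks_from_def by simp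

lemma walks_from_Suc: "walks_from E L (Suc j) u = (\<Sum>v\<in>L. adj E u v * walks_from E L j v)"
  unfolding walks_from_def adj_mult_def by simp

lemma walk_count_1: "walk_count E L 1 = ell1 E L"
  unfolding walk_count_def ell1_def by (simp add: walks_from_Suc)

lemma walk_count_2: "walk_count E L 2 = ell2 E L"
proof -
  have "walk_count E L 2 = (\<Sum>i\<in>L. \<Sum>k\<in>L. \<Sum>j\<in>L. adj E i k * adj E k j)"
    unfolding walk_count_def numeral_2_eq_2 by (simp add: walks_from_Suc sum_distrib_left)
  also have "\<dots> = ell2 E L" unfolding ell2_def by (rule sum.cong[OF refl]) (rule sum.swap)
  finally show ?thesis .
qed

lemma adj_mult_diff: "adj_mult E L (\<lambda>v. f v - h v) u = adj_mult E L f u - adj_mult E L h u"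
  unfolding adj_mult_def by (simp add: algebra_simps sum_subtractf)

lemma abs_adj_mult_le:
  fixes M :: real
  assumes "finite L" and "\<forall>v\<in>L. \<bar>y v\<bar> \<le> M"
  shows "\<bar>adj_mult E L y u\<bar> \<le> card L * M"
proof -
  have "\<bar>adj_mult E L y u\<bar> \<le> (\<Sum>v\<in>L. \<bar>adj E u v * y v\<bar>)"
    unfolding adj_mult_def by (rule sum_abs)
  also have "\<dots> \<le> (\<Sum>v\<in>L. M)"
    using assms(2) by (intro sum_mono) (auto simp: adj_def)
  finally show ?thesis by simp
qed

lemma abs_adj_mult_power_le:
  fixes M :: real
  assumes "finite L" and "\<forall>v\<in>L. \<bar>y v\<bar> \<le> M" and "u \<in> L"
  shows "\<bar>(adj_mult E L ^^ p) y u\<bar> \<le> real (card L) ^ p * M"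
  using \<open>u \<in> L\<close>
proof (induction p arbitrary: u)
  case 0
  then show ?case using assms(2) by simp
next
  case (Suc p)
  then have "\<bar>adj_mult E L ((adj_mult E L ^^ p) y) u\<bar> \<le> card L * (real (card L) ^ p * M)"
    by (intro abs_adj_mult_le[OF assms(1)]) blast
  then show ?case by (simp add: mult.assoc)
qed

lemma abs_walks_from_le: "finite L \<Longrightarrow> u \<in> L \<Longrightarrow> \<bar>walks_from E L j u\<bar> \<le> real (card L) ^ j"
  using abs_adj_mult_power_le[where y = "\<lambda>_. 1" and M = 1] unfolding walks_from_def by simp

lemma abs_walk_count_le:
  assumes "finite L"
  shows "\<bar>walk_count E L j\<bar> \<le> real (card L) ^ Suc j"
proof -
  have "\<bar>walk_count E L j\<bar> \<le> (\<Sum>u\<in>L. \<bar>walks_from E L j u\<bar>)"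
    unfolding walk_count_def by (rule sum_abs)
  also have "\<dots> \<le> (\<Sum>u\<in>L. real (card L) ^ j)"
    using abs_walks_from_le[OF assms] by (intro sum_mono) auto
  finally show ?thesis by simp
qed

lemma resolvent_bound:
  fixes lam M :: real
  assumes "finite L" "L \<noteq> {}" and lam: "card L < \<bar>lam\<bar>"
    and eq: "\<forall>u\<in>L. lam * d u = c u + adj_mult E L d u" and c: "\<forall>u\<in>L. \<bar>c u\<bar> \<le> M"
    and "u \<in> L"
  shows "\<bar>d u\<bar> \<le> M / (\<bar>lam\<bar> - card L)"
proof -
  define D where "D = Max ((\<lambda>v. \<bar>d v\<bar>) ` L)"
  have D: "\<forall>v\<in>L. \<bar>d v\<bar> \<le> D" unfolding D_def using \<open>finite L\<close> by auto
  have "D \<in> (\<lambda>v. \<bar>d v\<bar>) ` L" unfolding D_def using assms(1,2) by (intro Max_in) auto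
  then obtain v where v: "v \<in> L" "\<bar>d v\<bar> = D" by auto
  have "\<bar>lam\<bar> * D = \<bar>lam * d v\<bar>" using v(2) by (simp add: abs_mult)
  also have "\<dots> = \<bar>c v + adj_mult E L d v\<bar>" using eq v(1) by simp
  also have "\<dots> \<le> M + card L * D"
    using abs_triangle_ineq[of "c v" "adj_mult E L d v"] bspec[OF c v(1)]
      abs_adj_mult_le[OF \<open>finite L\<close> D, of E v] by linarith
  finally have "D \<le> M / (\<bar>lam\<bar> - card L)" using lam by (simp add: field_simps)
  then show ?thesis using D \<open>u \<in> L\<close> by (blast intro: order_trans)
qed

text \<open>\<open>y\<close> agrees with \<open>(lam - A_L)\<^sup>-\<^sup>1 1\<close> on \<open>L\<close>.\<close>
definition resolvent_solution :: "(nat \<Rightarrow> nat \<Rightarrow> bool) \<Rightarrow> nat set \<Rightarrow> real \<Rightarrow> (nat \<Rightarrow> real) \<Rightarrow> bool" where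
  "resolvent_solution E L lam y \<longleftrightarrow> (\<forall>u\<in>L. lam * y u = 1 + adj_mult E L y u)"

lemma resolvent_solution_power:
  assumes "resolvent_solution E L lam y" and "u \<in> L"
  shows "lam * (adj_mult E L ^^ j) y u = walks_from E L j u + (adj_mult E L ^^ Suc j) y u"
  using \<open>u \<in> L\<close>
proof (induction j arbitrary: u)
  case 0
  then show ?case using assms(1) unfolding resolvent_solution_def by simp
next
  case (Suc j)
  have "lam * (adj_mult E L ^^ Suc j) y u = (\<Sum>v\<in>L. adj E u v * (lam * (adj_mult E L ^^ j) y v))"
    by (simp add: adj_mult_def sum_distrib_left algebra_simps)
  also have "\<dots> = (\<Sum>v\<in>L. adj E u v * (walks_from E L j v + (adj_mult E L ^^ Suc j) y v))"
    using Suc.IH by (intro sum.cong) auto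
  also have "\<dots> = walks_from E L (Suc j) u + (adj_mult E L ^^ Suc (Suc j)) y u"
    by (simp add: walks_from_Suc adj_mult_def sum.distrib algebra_simps)
  finally show ?case .
qed

lemma resolvent_solution_sum:
  assumes "resolvent_solution E L lam y" and "lam \<noteq> 0"
  shows "(\<Sum>u\<in>L. y u) = (\<Sum>j<p. walk_count E L j / lam ^ Suc j)
           + (\<Sum>u\<in>L. (adj_mult E L ^^ p) y u) / lam ^ p"
proof (induction p)
  case 0
  then show ?case by simp
next
  case (Suc p)
  have "(\<Sum>u\<in>L. (adj_mult E L ^^ p) y u)
      = (\<Sum>u\<in>L. (walks_from E L p u + (adj_mult E L ^^ Suc p) y u) / lam)"
    using resolvent_solution_power[OF assms(1)] \<open>lam \<noteq> 0\<close>
    by (intro sum.cong) (auto simp: field_simps)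
  also have "\<dots> = (walk_count E L p + (\<Sum>u\<in>L. (adj_mult E L ^^ Suc p) y u)) / lam"
    unfolding walk_count_def by (simp add: sum_divide_distrib[symmetric] sum.distrib)
  finally have "(\<Sum>u\<in>L. (adj_mult E L ^^ p) y u) / lam ^ p
      = walk_count E L p / lam ^ Suc p + (\<Sum>u\<in>L. (adj_mult E L ^^ Suc p) y u) / lam ^ Suc p"
    by (simp add: divide_divide_eq_left add_divide_distrib mult.commute)
  then show ?case unfolding sum.lessThan_Suc using Suc.IH by linarith
qed

section \<open>Joins of a graph with an independent set\<close>

locale join_indep =
  fixes n :: nat and E :: "nat \<Rightarrow> nat \<Rightarrow> bool" and L :: "nat set"
  assumes simple: "simple_graph n E" and L_sub: "L \<subseteq> {0..<n}" and L_ne: "L \<noteq> {}"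
    and joined: "\<forall>u\<in>L. \<forall>v\<in>{0..<n} - L. E u v"
    and indep: "\<forall>u\<in>{0..<n} - L. \<forall>v\<in>{0..<n} - L. \<not> E u v"
    and I_ne: "{0..<n} - L \<noteq> {}"
begin

definition I :: "nat set" where "I = {0..<n} - L"
definition k :: real where "k = card L"
definition m :: real where "m = card I"
definition g :: real where "g = sqrt (k * m)"
definition b :: "nat \<Rightarrow> real" where "b j = walk_count E L j / k"

lemma finite_L: "finite L"
  using L_sub finite_subset by blast

lemma k_ge_1: "1 \<le> k"
  unfolding k_def using finite_L L_ne by (simp add: Suc_leI card_gt_0_iff)

lemma m_ge_1: "1 \<le> m"
  unfolding m_def I_def using I_ne by (simp add: Suc_leI card_gt_0_iff)

lemma g_pos: "0 < g"
  unfolding g_def using k_ge_1 m_ge_1 by simp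

lemma g_sq: "g^2 = k * m"
  unfolding g_def using k_ge_1 m_ge_1 by simp

lemma abs_b_le: "\<bar>b j\<bar> \<le> k^j"
proof -
  have "\<bar>walk_count E L j\<bar> \<le> k * k^j"
    using abs_walk_count_le[OF finite_L] unfolding k_def by simp
  then show ?thesis unfolding b_def using k_ge_1 by (simp add: field_simps)
qed

lemma walk_count_0: "walk_count E L 0 = k"
  unfolding walk_count_def k_def by simp

lemma vertices_split: "{..<n} = L \<union> I" "L \<inter> I = {}"
  unfolding I_def using L_sub by auto

lemma sum_vertices: "(\<Sum>j<n. f j) = (\<Sum>j\<in>L. f j) + (\<Sum>j\<in>I. f j)"
  unfolding vertices_split(1) by (rule sum.union_disjoint[OF finite_L _ vertices_split(2)]) (simp add: I_def)

lemma adj_row_I: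
  assumes "i \<in> I"
  shows "(\<Sum>j<n. adj E i j * v j) = (\<Sum>j\<in>L. v j)"
proof -
  have "E i j" if "j \<in> L" for j
    using joined simple assms that unfolding I_def simple_graph_def by blast
  moreover have "\<not> E i j" if "j \<in> I" for j
    using indep assms that unfolding I_def by blast
  ultimately show ?thesis unfolding sum_vertices by (simp add: adj_def)
qed

lemma adj_row_L:
  assumes "u \<in> L"
  shows "(\<Sum>j<n. adj E u j * v j) = adj_mult E L v u + (\<Sum>j\<in>I. v j)"
proof -
  have "E u j" if "j \<in> I" for j
    using joined assms that unfolding I_def by blast
  then show ?thesis unfolding sum_vertices adj_mult_def by (simp add: adj_def)
qed

lemma resolvent_solution_abs_le:
  assumes "resolvent_solution E L lam y" "k < \<bar>lam\<bar>" "u \<in> L"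
  shows "\<bar>y u\<bar> \<le> 1 / (\<bar>lam\<bar> - k)"
  using resolvent_bound[OF finite_L L_ne, of lam y "\<lambda>_. 1" E 1 u] assms
  unfolding resolvent_solution_def k_def by auto

lemma eigenvalue_imp_resolvent_solution:
  assumes ev: "is_eigenvalue n (adj E) lam" and lam: "k < \<bar>lam\<bar>"
  shows "\<exists>y. resolvent_solution E L lam y \<and> lam = m * (\<Sum>u\<in>L. y u)"
proof -
  obtain v where v_ne: "\<exists>i<n. v i \<noteq> 0" and v: "\<forall>i<n. (\<Sum>j<n. adj E i j * v j) = lam * v i"
    using ev unfolding is_eigenvalue_def by blast
  have lam0: "lam \<noteq> 0" using lam k_ge_1 by auto
  define t where "t = (\<Sum>u\<in>L. v u)"
  \<comment> \<open>The eigenvector is constant \<open>t / lam\<close> on \<open>I\<close>; rescaled, its restriction to \<open>L\<close> is \<open>y\<close>.\<close>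
  have v_I: "v i = t / lam" if "i \<in> I" for i
    using v adj_row_I[OF that, of v] that lam0 unfolding t_def I_def by (auto simp: field_simps)
  have sum_I: "(\<Sum>j\<in>I. v j) = m * t / lam" using v_I unfolding m_def by simp
  have v_L: "lam * v u = m * t / lam + adj_mult E L v u" if "u \<in> L" for u
    using v adj_row_L[OF that, of v] sum_I that L_sub by auto
  have "t \<noteq> 0"
  proof
    assume "t = 0"
    then have "v u = 0" if "u \<in> L" for u
      using resolvent_bound[OF finite_L L_ne, of lam v "\<lambda>_. 0" E 0 u] v_L lam that
      unfolding k_def by auto
    moreover have "v i = 0" if "i \<in> I" for i using v_I[OF that] \<open>t = 0\<close> by simp
    ultimately show False using v_ne vertices_split(1) by auto
  qed
  then have mt: "m * t \<noteq> 0" using m_ge_1 by simp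
  define y where "y u = v u * lam / (m * t)" for u
  have "adj_mult E L y u = adj_mult E L v u * lam / (m * t)" for u
    unfolding adj_mult_def y_def by (simp add: sum_distrib_right sum_divide_distrib mult.assoc)
  then have "resolvent_solution E L lam y"
    unfolding resolvent_solution_def y_def using v_L mt lam0 by (auto simp: field_simps)
  moreover have "lam = m * (\<Sum>u\<in>L. y u)"
    unfolding y_def t_def[symmetric] sum_divide_distrib[symmetric] sum_distrib_right[symmetric]
    using mt by (simp add: t_def)
  ultimately show ?thesis by blast
qed

lemma resolvent_solution_imp_eigenvalue:
  assumes y: "resolvent_solution E L lam y" and lam: "lam = m * (\<Sum>u\<in>L. y u)"
  shows "is_eigenvalue n (adj E) lam"
proof -
  define v where "v u = (if u \<in> L then y u else 1 / m)" for u
  have m0: "m \<noteq> 0" using m_ge_1 by simp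
  obtain i0 where i0: "i0 \<in> I" using I_ne unfolding I_def by blast
  have sum_I: "(\<Sum>j\<in>I. v j) = 1" unfolding v_def I_def using m0 unfolding m_def I_def by simp
  have "(\<Sum>j<n. adj E i j * v j) = lam * v i" if "i < n" for i
  proof (cases "i \<in> L")
    case True
    then show ?thesis
      using adj_row_L[OF True, of v] sum_I y unfolding resolvent_solution_def adj_mult_def v_def
      by simp
  next
    case False
    then have "i \<in> I" using that unfolding I_def by auto
    then show ?thesis using adj_row_I[of i v] lam False m0 unfolding v_def by simp
  qed
  moreover have "v i0 \<noteq> 0" using i0 m0 unfolding v_def I_def by auto
  moreover have "i0 < n" using i0 unfolding I_def by auto
  ultimately show ?thesis unfolding is_eigenvalue_def by blast
qed

definition resolvent :: "real \<Rightarrow> nat \<Rightarrow> real" where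
  "resolvent lam u = (\<Sum>j. walks_from E L j u / lam ^ Suc j)"

lemma summable_resolvent:
  assumes lam: "2 * k \<le> \<bar>lam\<bar>" and u: "u \<in> L"
  shows "summable (\<lambda>j. walks_from E L j u / lam ^ Suc j)"
proof (rule summable_comparison_test'[of "\<lambda>j. (1/2) ^ j" 0])
  show "summable (\<lambda>j. (1/2::real) ^ j)" by (rule summable_geometric) simp
  fix j :: nat
  have "(2 * k) ^ j \<le> \<bar>lam\<bar> ^ j * \<bar>lam\<bar>"
    using lam k_ge_1 power_mono[OF lam, of j] mult_left_mono[of 1 "\<bar>lam\<bar>" "\<bar>lam\<bar> ^ j"] by auto
  then have "\<bar>walks_from E L j u\<bar> / \<bar>lam\<bar> ^ Suc j \<le> k ^ j / (2 * k) ^ j"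
    using abs_walks_from_le[OF finite_L u] k_ge_1 unfolding k_def
    by (intro frac_le) (auto simp: mult.commute)
  also have "\<dots> = (1/2) ^ j" using k_ge_1 by (simp add: power_divide power_mult_distrib)
  finally show "norm (walks_from E L j u / lam ^ Suc j) \<le> (1/2) ^ j"
    by (simp add: power_abs abs_mult)
qed

lemma resolvent_solution_resolvent:
  assumes lam: "2 * k \<le> \<bar>lam\<bar>"
  shows "resolvent_solution E L lam (resolvent lam)"
  unfolding resolvent_solution_def
proof
  fix u assume u: "u \<in> L"
  have lam0: "lam \<noteq> 0" using lam k_ge_1 by auto
  let ?f = "\<lambda>v j. walks_from E L j v / lam ^ Suc j"
  define h where "h j = lam * ?f u j" for j
  have "summable h" unfolding h_def by (intro summable_mult summable_resolvent[OF lam u])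
  have "lam * resolvent lam u = (\<Sum>j. h j)"
    unfolding h_def resolvent_def by (rule suminf_mult[OF summable_resolvent[OF lam u], symmetric])
  also have "\<dots> = h 0 + (\<Sum>j. h (Suc j))"
    using suminf_split_head[OF \<open>summable h\<close>] by simp
  also have "h 0 = 1" unfolding h_def using lam0 by simp
  also have "(\<Sum>j. h (Suc j)) = (\<Sum>j. \<Sum>v\<in>L. adj E u v * ?f v j)"
    unfolding h_def using lam0 by (simp add: walks_from_Suc sum_distrib_left sum_divide_distrib)
  also have "\<dots> = (\<Sum>v\<in>L. \<Sum>j. adj E u v * ?f v j)"
    using summable_mult[OF summable_resolvent[OF lam]] by (intro suminf_sum) blast
  also have "\<dots> = adj_mult E L (resolvent lam) u"
    unfolding adj_mult_def resolvent_def
    using suminf_mult[OF summable_resolvent[OF lam]] by (intro sum.cong) auto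
  finally show "lam * resolvent lam u = 1 + adj_mult E L (resolvent lam) u" .
qed

lemma resolvent_lipschitz:
  assumes x: "2 * k \<le> \<bar>x\<bar>" and y: "2 * k \<le> \<bar>y\<bar>" and u: "u \<in> L"
  shows "\<bar>resolvent x u - resolvent y u\<bar> \<le> \<bar>x - y\<bar> / k^2"
proof -
  have Ry: "\<bar>resolvent y v\<bar> \<le> 1 / k" if "v \<in> L" for v
  proof -
    have "\<bar>resolvent y v\<bar> \<le> 1 / (\<bar>y\<bar> - k)"
      using resolvent_solution_abs_le[OF resolvent_solution_resolvent[OF y] _ that] y k_ge_1 by simp
    also have "\<dots> \<le> 1 / k" using y k_ge_1 by (intro divide_left_mono) auto
    finally show ?thesis .
  qed
  have c: "\<forall>v\<in>L. \<bar>- ((x - y) * resolvent y v)\<bar> \<le> \<bar>x - y\<bar> * (1 / k)"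
  proof
    fix v assume "v \<in> L"
    then show "\<bar>- ((x - y) * resolvent y v)\<bar> \<le> \<bar>x - y\<bar> * (1 / k)"
      unfolding abs_minus_cancel abs_mult by (intro mult_left_mono Ry) auto
  qed
  have "card L < \<bar>x\<bar>" using x k_ge_1 unfolding k_def by linarith
  moreover have "\<forall>v\<in>L. x * (resolvent x v - resolvent y v)
      = - ((x - y) * resolvent y v) + adj_mult E L (\<lambda>v. resolvent x v - resolvent y v) v"
    using resolvent_solution_resolvent[OF x] resolvent_solution_resolvent[OF y]
    unfolding resolvent_solution_def adj_mult_diff by (simp add: algebra_simps)
  ultimately have "\<bar>resolvent x u - resolvent y u\<bar> \<le> \<bar>x - y\<bar> * (1 / k) / (\<bar>x\<bar> - card L)"
    by (rule resolvent_bound[OF finite_L L_ne _ _ c u, where d = "\<lambda>v. resolvent x v - resolvent y v"])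
  also have "\<dots> = \<bar>x - y\<bar> * (1 / k) / (\<bar>x\<bar> - k)" unfolding k_def ..
  also have "\<dots> \<le> \<bar>x - y\<bar> * (1 / k) / k"
    using x k_ge_1 by (intro divide_left_mono) auto
  finally show ?thesis by (simp add: power2_eq_square)
qed

definition secular :: "real \<Rightarrow> real" where
  "secular lam = lam - m * (\<Sum>u\<in>L. resolvent lam u)"

lemma continuous_on_secular: "continuous_on {x. 2 * k \<le> \<bar>x\<bar>} secular"
proof (rule lipschitz_on_continuous_on)
  show "(1 + m / k)-lipschitz_on {x. 2 * k \<le> \<bar>x\<bar>} secular"
  proof (rule lipschitz_onI)
    fix x y assume "x \<in> {x. 2 * k \<le> \<bar>x\<bar>}" "y \<in> {x. 2 * k \<le> \<bar>x\<bar>}"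
    then have "\<bar>(\<Sum>u\<in>L. resolvent x u) - (\<Sum>u\<in>L. resolvent y u)\<bar> \<le> (\<Sum>u\<in>L. \<bar>x - y\<bar> / k^2)"
      unfolding sum_subtractf[symmetric] using resolvent_lipschitz
      by (intro order_trans[OF sum_abs sum_mono]) auto
    also have "\<dots> = \<bar>x - y\<bar> / k" using k_ge_1 unfolding k_def by (simp add: power2_eq_square)
    finally have sums: "\<bar>(\<Sum>u\<in>L. resolvent x u) - (\<Sum>u\<in>L. resolvent y u)\<bar> \<le> \<bar>x - y\<bar> / k" .
    have "dist (secular x) (secular y)
        = \<bar>(x - y) - m * ((\<Sum>u\<in>L. resolvent x u) - (\<Sum>u\<in>L. resolvent y u))\<bar>"
      unfolding secular_def dist_real_def by (simp add: algebra_simps)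
    also have "\<dots> \<le> \<bar>x - y\<bar> + m * \<bar>(\<Sum>u\<in>L. resolvent x u) - (\<Sum>u\<in>L. resolvent y u)\<bar>"
      using abs_triangle_ineq4[of "x - y" "m * ((\<Sum>u\<in>L. resolvent x u) - (\<Sum>u\<in>L. resolvent y u))"]
        m_ge_1 by (simp add: abs_mult)
    also have "\<dots> \<le> \<bar>x - y\<bar> + m * (\<bar>x - y\<bar> / k)"
      using mult_left_mono[OF sums, of m] m_ge_1 by simp
    also have "\<dots> = (1 + m / k) * dist x y" by (simp add: dist_real_def algebra_simps)
    finally show "dist (secular x) (secular y) \<le> (1 + m / k) * dist x y" .
  next
    show "0 \<le> 1 + m / k" using k_ge_1 m_ge_1 by simp
  qed
qed

lemma secular_zero_imp_eigenvalue:
  assumes "2 * k \<le> \<bar>lam\<bar>" and "secular lam = 0"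
  shows "is_eigenvalue n (adj E) lam"
  using resolvent_solution_imp_eigenvalue[OF resolvent_solution_resolvent[OF assms(1)]] assms(2)
  unfolding secular_def by simp

lemma quintic_approx:
  assumes y: "resolvent_solution E L lam y" and lam: "2 * k \<le> \<bar>lam\<bar>" "g / 2 \<le> \<bar>lam\<bar>"
  shows "\<bar>lam^4 * (lam - m * (\<Sum>u\<in>L. y u)) / g^5 - quintic (b 1) (b 2) (b 3) (lam / g) (1 / g)\<bar>
           \<le> 4 * k^4 / g^4"
proof -
  have lam0: "lam \<noteq> 0" using lam k_ge_1 by auto
  define S where "S = (\<Sum>u\<in>L. (adj_mult E L ^^ 4) y u)"
  have "(\<Sum>u\<in>L. y u) = k/lam + walk_count E L 1/lam^2 + walk_count E L 2/lam^3
      + walk_count E L 3/lam^4 + S/lam^4"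
    using resolvent_solution_sum[OF y lam0, of 4] unfolding S_def
    by (simp add: eval_nat_numeral walk_count_0)
  then have expansion: "lam^4 * (lam - m * (\<Sum>u\<in>L. y u)) / g^5
      = quintic (b 1) (b 2) (b 3) (lam / g) (1 / g) - S / k / g^3"
    unfolding b_def using quintic_expansion_identity g_pos k_ge_1 lam0 g_sq by simp
  have y_le: "\<forall>u\<in>L. \<bar>y u\<bar> \<le> 2 / \<bar>lam\<bar>"
  proof
    fix u assume "u \<in> L"
    then have "\<bar>y u\<bar> \<le> 1 / (\<bar>lam\<bar> - k)"
      using resolvent_solution_abs_le[OF y] lam k_ge_1 by simp
    also have "\<dots> \<le> 2 / \<bar>lam\<bar>" using lam k_ge_1 by (simp add: field_simps)
    finally show "\<bar>y u\<bar> \<le> 2 / \<bar>lam\<bar>" .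
  qed
  have "\<bar>S\<bar> \<le> (\<Sum>u\<in>L. \<bar>(adj_mult E L ^^ 4) y u\<bar>)" unfolding S_def by (rule sum_abs)
  also have "\<dots> \<le> (\<Sum>u\<in>L. real (card L) ^ 4 * (2 / \<bar>lam\<bar>))"
    using abs_adj_mult_power_le[OF finite_L y_le] by (intro sum_mono) blast
  also have "\<dots> = k * (k^4 * (2 / \<bar>lam\<bar>))" unfolding k_def by simp
  finally have S_le: "\<bar>S\<bar> \<le> k * (k^4 * (2 / \<bar>lam\<bar>))" .
  have "\<bar>S / k / g^3\<bar> = \<bar>S\<bar> / (k * g^3)" using k_ge_1 g_pos by (simp add: abs_divide)
  also have "\<dots> \<le> k * (k^4 * (2 / \<bar>lam\<bar>)) / (k * g^3)"
    using S_le k_ge_1 g_pos by (intro divide_right_mono) auto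
  also have "\<dots> = 2 * k^4 / (\<bar>lam\<bar> * g^3)" using k_ge_1 by simp
  also have "\<dots> \<le> 2 * k^4 / (g / 2 * g^3)"
    using lam g_pos by (intro divide_left_mono mult_right_mono) auto
  also have "\<dots> = 4 * k^4 / g^4" by (simp add: eval_nat_numeral)
  finally show ?thesis unfolding expansion by simp
qed

lemma eigenvalue_quintic_small:
  assumes ev: "is_eigenvalue n (adj E) lam" and lam: "2 * k \<le> \<bar>lam\<bar>" "g / 2 \<le> \<bar>lam\<bar>"
  shows "\<bar>quintic (b 1) (b 2) (b 3) (lam / g) (1 / g)\<bar> \<le> 4 * k^4 / g^4"
proof -
  obtain y where y: "resolvent_solution E L lam y" and "lam = m * (\<Sum>u\<in>L. y u)"
    using eigenvalue_imp_resolvent_solution[OF ev] lam k_ge_1 by fastforce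
  then show ?thesis using quintic_approx[OF y lam] by simp
qed

lemma secular_sign:
  assumes s: "\<bar>s\<bar> = 1" and lam: "2 * k \<le> \<bar>lam\<bar>" "g / 2 \<le> \<bar>lam\<bar>"
    and big: "4 * k^4 / g^4 < s * quintic (b 1) (b 2) (b 3) (lam / g) (1 / g)"
  shows "0 < s * secular lam"
proof -
  have "\<bar>lam^4 * secular lam / g^5 - quintic (b 1) (b 2) (b 3) (lam / g) (1 / g)\<bar> \<le> 4 * k^4 / g^4"
    using quintic_approx[OF resolvent_solution_resolvent lam] lam unfolding secular_def by simp
  then have "\<bar>s * (lam^4 * secular lam / g^5) - s * quintic (b 1) (b 2) (b 3) (lam / g) (1 / g)\<bar>
      \<le> 4 * k^4 / g^4"
    unfolding right_diff_distrib[symmetric] abs_mult s by simp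
  then have "0 < s * (lam^4 * secular lam / g^5)" using abs_le_D2 big by fastforce
  then have "0 < s * secular lam * (lam^4 / g^5)" by (simp add: ac_simps)
  moreover have "0 < lam^4 / g^5" using lam g_pos k_ge_1 by auto
  ultimately show ?thesis by (rule zero_less_mult_pos2)
qed

lemma eigenvalue_sq:
  assumes ev: "is_eigenvalue n (adj E) lam" and lam: "2 * k \<le> \<bar>lam\<bar>"
  shows "\<exists>\<theta>. lam^2 = m * (k + \<theta>) \<and> \<bar>\<theta>\<bar> \<le> 2 * k^2 / \<bar>lam\<bar>"
proof -
  obtain y where y: "resolvent_solution E L lam y" and lam_eq: "lam = m * (\<Sum>u\<in>L. y u)"
    using eigenvalue_imp_resolvent_solution[OF ev] lam k_ge_1 by fastforce
  define \<theta> where "\<theta> = (\<Sum>u\<in>L. adj_mult E L y u)"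
  have y_le: "\<forall>u\<in>L. \<bar>y u\<bar> \<le> 2 / \<bar>lam\<bar>"
  proof
    fix u assume "u \<in> L"
    then have "\<bar>y u\<bar> \<le> 1 / (\<bar>lam\<bar> - k)"
      using resolvent_solution_abs_le[OF y] lam k_ge_1 by simp
    also have "\<dots> \<le> 2 / \<bar>lam\<bar>" using lam k_ge_1 by (simp add: field_simps)
    finally show "\<bar>y u\<bar> \<le> 2 / \<bar>lam\<bar>" .
  qed
  have "lam * (\<Sum>u\<in>L. y u) = k + \<theta>"
    using y unfolding resolvent_solution_def \<theta>_def k_def sum_distrib_left by (simp add: sum.distrib)
  then have "lam^2 = m * (k + \<theta>)"
    using lam_eq by (metis mult.left_commute power2_eq_square)
  moreover have "\<bar>\<theta>\<bar> \<le> (\<Sum>u\<in>L. k * (2 / \<bar>lam\<bar>))"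
    unfolding \<theta>_def using abs_adj_mult_le[OF finite_L y_le] unfolding k_def
    by (intro order_trans[OF sum_abs sum_mono]) auto
  then have "\<bar>\<theta>\<bar> \<le> 2 * k^2 / \<bar>lam\<bar>" unfolding k_def by (simp add: power2_eq_square ac_simps)
  ultimately show ?thesis by blast
qed

lemma eigenvalue_near_g:
  assumes ev: "is_eigenvalue n (adj E) lam" and lam: "4 * k \<le> \<bar>lam\<bar>"
  shows "g / 2 \<le> \<bar>lam\<bar>" and "\<bar>(lam / g)^2 - 1\<bar> \<le> 4 * k / g"
proof -
  have "2 * k \<le> \<bar>lam\<bar>" using lam k_ge_1 by linarith
  then obtain \<theta> where sq: "lam^2 = m * (k + \<theta>)" and \<theta>: "\<bar>\<theta>\<bar> \<le> 2 * k^2 / \<bar>lam\<bar>"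
    using eigenvalue_sq[OF ev] by blast
  have "2 * k^2 / \<bar>lam\<bar> \<le> 2 * k^2 / (4 * k)"
    using lam k_ge_1 by (intro divide_left_mono) auto
  also have "\<dots> = k / 2" using k_ge_1 by (simp add: power2_eq_square)
  finally have "k / 2 \<le> k + \<theta>" using abs_le_D2[OF \<theta>] by linarith
  then have "m * (k / 2) \<le> lam^2" unfolding sq using m_ge_1 by (intro mult_left_mono) auto
  have "(g / 2)^2 = m * (k / 2) / 2" using g_sq by (simp add: power_divide algebra_simps)
  also have "\<dots> \<le> m * (k / 2)" using m_ge_1 k_ge_1 by simp
  also have "\<dots> \<le> \<bar>lam\<bar>^2" using \<open>m * (k / 2) \<le> lam^2\<close> by simp
  finally have "(g / 2)^2 \<le> \<bar>lam\<bar>^2" .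
  then show lam_g: "g / 2 \<le> \<bar>lam\<bar>" by (rule power2_le_imp_le) simp
  have "\<bar>lam^2 - g^2\<bar> = m * \<bar>\<theta>\<bar>" unfolding sq g_sq using m_ge_1 by (simp add: algebra_simps abs_mult)
  also have "\<dots> \<le> m * (2 * k^2 / (g / 2))"
  proof -
    have "2 * k^2 / \<bar>lam\<bar> \<le> 2 * k^2 / (g / 2)" using lam_g g_pos by (intro divide_left_mono) auto
    then show ?thesis using \<theta> m_ge_1 by (intro mult_left_mono) auto
  qed
  also have "\<dots> = 4 * k * (k * m) / g" by (simp add: field_simps power2_eq_square)
  also have "\<dots> = 4 * k * g" unfolding g_sq[symmetric] using g_pos by (simp add: power2_eq_square)
  finally have diff: "\<bar>lam^2 - g^2\<bar> \<le> 4 * k * g" .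
  have "(lam / g)^2 - 1 = (lam^2 - g^2) / g^2"
    using g_pos by (simp add: power_divide diff_divide_distrib)
  then have "\<bar>(lam / g)^2 - 1\<bar> = \<bar>lam^2 - g^2\<bar> / g^2" by (simp add: abs_divide)
  also have "\<dots> \<le> 4 * k * g / g^2" using diff by (simp add: divide_right_mono)
  also have "\<dots> = 4 * k / g" using g_pos by (simp add: power2_eq_square)
  finally show "\<bar>(lam / g)^2 - 1\<bar> \<le> 4 * k / g" .
qed

text \<open>The sign \<open>s = 1\<close> treats the largest eigenvalue, \<open>s = -1\<close> the smallest.\<close>
lemma eigenvalue_near_root:
  assumes s: "\<bar>s\<bar> = 1" and win: "root_window (b 1) (b 2) (b 3) (4 * k^4) D (s / g)"
    and big: "80 * k \<le> g" and ev: "is_eigenvalue n (adj E) lam" and lam: "4 * k \<le> s * lam"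
  shows "\<bar>s * lam - g * quintic_root (b 1) (b 2) (b 3) (s / g)\<bar> \<le> D / g^3"
proof -
  let ?W = "quintic_root (b 1) (b 2) (b 3) (s / g)"
  define u where "u = s * lam / g"
  have ss: "s * s = 1" and s4: "(s / g)^4 = 1 / g^4" using s by (auto simp: abs_eq_iff' power_divide)
  have "\<bar>s * lam\<bar> = \<bar>lam\<bar>" using s by (simp add: abs_mult)
  then have abs_lam: "\<bar>lam\<bar> = s * lam" using lam k_ge_1 by simp
  then have near: "g / 2 \<le> \<bar>lam\<bar>" "\<bar>(lam / g)^2 - 1\<bar> \<le> 4 * k / g"
    using eigenvalue_near_g[OF ev] lam by auto
  have "4 * k / g \<le> 1 / 20" using big g_pos by (simp add: field_simps)
  moreover have "u^2 = (lam / g)^2" unfolding u_def using ss by (simp add: power_divide power_mult_distrib power2_eq_square)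
  moreover have u_pos: "0 < u" unfolding u_def using abs_lam lam k_ge_1 g_pos by simp
  moreover have "\<bar>u - 1\<bar> \<le> \<bar>u^2 - 1\<bar>"
  proof -
    have "u^2 - 1 = (u - 1) * (u + 1)" by (simp add: power2_eq_square algebra_simps)
    then have "\<bar>u^2 - 1\<bar> = \<bar>u - 1\<bar> * (u + 1)" using u_pos by (simp add: abs_mult)
    then show ?thesis using u_pos by (simp add: mult_left_mono[of 1 "u + 1" "\<bar>u - 1\<bar>", simplified])
  qed
  ultimately have u1: "\<bar>u - 1\<bar> \<le> 1/20" using near(2) by linarith
  have scale: "lam / g = s * u" "1 / g = s * (s / g)"
    unfolding u_def using ss g_pos by (auto simp: field_simps)
  have "\<bar>quintic (b 1) (b 2) (b 3) u (s / g)\<bar> = \<bar>quintic (b 1) (b 2) (b 3) (lam / g) (1 / g)\<bar>"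
    unfolding scale quintic_sign_flip[OF s] abs_mult s by simp
  also have "\<dots> \<le> 4 * k^4 / g^4"
    using eigenvalue_quintic_small[OF ev] near(1) lam abs_lam k_ge_1 by auto
  finally have "\<bar>quintic (b 1) (b 2) (b 3) u (s / g)\<bar> \<le> 4 * k^4 * (s / g)^4"
    unfolding s4 by simp
  then have "\<bar>u - ?W\<bar> \<le> D * (s / g)^4"
    using win u1 unfolding root_window_def by blast
  then have "g * \<bar>u - ?W\<bar> \<le> g * (D / g^4)" using s4 g_pos by (simp add: field_simps)
  moreover have "g * \<bar>u - ?W\<bar> = \<bar>s * lam - g * ?W\<bar>"
  proof -
    have "g * (u - ?W) = s * lam - g * ?W" unfolding u_def using g_pos by (simp add: right_diff_distrib)
    then have "\<bar>g * (u - ?W)\<bar> = \<bar>s * lam - g * ?W\<bar>" by simp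
    then show ?thesis using g_pos by (simp add: abs_mult)
  qed
  moreover have "g * (D / g^4) = D / g^3" using g_pos by (simp add: eval_nat_numeral)
  ultimately show ?thesis by simp
qed

lemma eigenvalue_exists_near_root:
  assumes s: "\<bar>s\<bar> = 1" and win: "root_window (b 1) (b 2) (b 3) (4 * k^4) D (s / g)"
    and big: "80 * k \<le> g"
  shows "\<exists>lam. is_eigenvalue n (adj E) lam \<and> 4 * k \<le> s * lam"
proof -
  let ?W = "quintic_root (b 1) (b 2) (b 3) (s / g)" and ?Q = "quintic (b 1) (b 2) (b 3)"
  define \<delta> where "\<delta> = D * (s / g)^4"
  \<comment> \<open>Intermediate value theorem for \<open>s * secular\<close> along \<open>x t\<close>, \<open>\<bar>t\<bar> \<le> \<delta>\<close>: at the two ends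
    its sign is that of the quintic, which \<open>root_window\<close> prescribes.\<close>
  define x where "x t = s * g * (?W + t)" for t
  have ss: "s * s = 1" and s4: "(s / g)^4 = 1 / g^4"
    using s by (auto simp: abs_eq_iff' power_divide)
  have "0 \<le> D" and window: "\<bar>?W - 1\<bar> + \<delta> \<le> 1/20"
    using win unfolding root_window_def \<delta>_def by auto
  then have \<delta>: "0 \<le> \<delta>" "19/20 \<le> ?W - \<delta>" "?W + \<delta> \<le> 21/20"
    using abs_ge_self[of "?W - 1"] abs_ge_minus_self[of "?W - 1"] unfolding \<delta>_def s4 by auto
  have sx: "s * x t = g * (?W + t)" for t unfolding x_def using ss by (simp add: mult.assoc[symmetric])
  have x_big: "4 * k \<le> s * x t \<and> 2 * k \<le> \<bar>x t\<bar> \<and> g / 2 \<le> \<bar>x t\<bar>" if "t \<in> {-\<delta>..\<delta>}" for t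
  proof -
    have "g * (19/20) \<le> s * x t" unfolding sx using \<delta> that g_pos by (intro mult_left_mono) auto
    moreover have "\<bar>x t\<bar> = \<bar>s * x t\<bar>" using s by (simp add: abs_mult)
    ultimately show ?thesis using big k_ge_1 g_pos by auto
  qed
  have quintic_x: "s' * ?Q (x t / g) (1 / g) = s' * s * ?Q (?W + t) (s / g)" for s' t
  proof -
    have scale: "x t / g = s * (?W + t)" "1 / g = s * (s / g)"
      unfolding x_def using ss g_pos by (auto simp: field_simps)
    show ?thesis unfolding scale quintic_sign_flip[OF s] by simp
  qed
  have up: "0 < s * secular (x \<delta>)"
  proof (rule secular_sign[OF s])
    show "4 * k^4 / g^4 < s * ?Q (x \<delta> / g) (1 / g)"
      unfolding quintic_x ss using win s4 unfolding root_window_def \<delta>_def by simp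
  qed (use x_big \<delta> in auto)
  have down: "0 < - s * secular (x (-\<delta>))"
  proof (rule secular_sign)
    show "4 * k^4 / g^4 < - s * ?Q (x (-\<delta>) / g) (1 / g)"
      unfolding quintic_x using ss win s4 unfolding root_window_def \<delta>_def by simp
  qed (use s x_big \<delta> in auto)
  have "continuous_on {-\<delta>..\<delta>} x" unfolding x_def by (intro continuous_intros)
  moreover have "x ` {-\<delta>..\<delta>} \<subseteq> {y. 2 * k \<le> \<bar>y\<bar>}" using x_big by auto
  ultimately have "continuous_on {-\<delta>..\<delta>} (\<lambda>t. secular (x t))"
    by (rule continuous_on_compose2[OF continuous_on_secular])
  then have "continuous_on {-\<delta>..\<delta>} (\<lambda>t. s * secular (x t))" by (intro continuous_intros)
  then obtain t where t: "t \<in> {-\<delta>..\<delta>}" and "s * secular (x t) = 0"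
    using IVT'[of "\<lambda>t. s * secular (x t)" "-\<delta>" 0 \<delta>] up down \<delta> by auto
  then have "secular (x t) = 0" using s by auto
  then have "is_eigenvalue n (adj E) (x t)" using secular_zero_imp_eigenvalue x_big[OF t] by blast
  then show ?thesis using x_big[OF t] by blast
qed

lemma spread_approx:
  assumes pos: "root_window (b 1) (b 2) (b 3) (4 * k^4) D (1 / g)"
    and neg: "root_window (b 1) (b 2) (b 3) (4 * k^4) D (-1 / g)"
    and big: "80 * k \<le> g"
  shows "\<bar>spread n E - (2 * g + (b 2 - 3/4 * b 1^2) / g)\<bar> \<le> 2 * D / g^3"
proof -
  define S where "S = {x. is_eigenvalue n (adj E) x}"
  have "finite S" unfolding S_def by (rule finite_eigenvalues)
  obtain lam0 where "is_eigenvalue n (adj E) lam0" "4 * k \<le> lam0"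
    using eigenvalue_exists_near_root[of 1] pos big by auto
  then have "lam0 \<in> S" "4 * k \<le> lam0" unfolding S_def by auto
  then have "Max S \<in> S" "4 * k \<le> Max S"
    using Max_in[OF \<open>finite S\<close>] Max_ge[OF \<open>finite S\<close> \<open>lam0 \<in> S\<close>] by auto
  then have hi: "\<bar>Max S - g * quintic_root (b 1) (b 2) (b 3) (1 / g)\<bar> \<le> D / g^3"
    using eigenvalue_near_root[of 1] pos big unfolding S_def by auto
  obtain lam1 where "is_eigenvalue n (adj E) lam1" "4 * k \<le> - lam1"
    using eigenvalue_exists_near_root[of "-1"] neg big by auto
  then have "lam1 \<in> S" "4 * k \<le> - lam1" unfolding S_def by auto
  then have "Min S \<in> S" "4 * k \<le> - Min S"
    using Min_in[OF \<open>finite S\<close>] Min_le[OF \<open>finite S\<close> \<open>lam1 \<in> S\<close>] by auto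
  then have lo: "\<bar>- Min S - g * quintic_root (b 1) (b 2) (b 3) (-1 / g)\<bar> \<le> D / g^3"
    using eigenvalue_near_root[of "-1"] neg big unfolding S_def by auto
  have "quintic_root (b 1) (b 2) (b 3) (1 / g) + quintic_root (b 1) (b 2) (b 3) (-1 / g)
      = 2 + (b 2 - 3/4 * b 1^2) * (1 / g)^2"
    using quintic_root_even[of "b 1" "b 2" "b 3" "1 / g"] by simp
  then have "g * quintic_root (b 1) (b 2) (b 3) (1 / g) + g * quintic_root (b 1) (b 2) (b 3) (-1 / g)
      = g * (2 + (b 2 - 3/4 * b 1^2) * (1 / g)^2)"
    by (metis distrib_left)
  also have "\<dots> = 2 * g + (b 2 - 3/4 * b 1^2) / g" using g_pos by (simp add: field_simps power2_eq_square)
  finally have roots: "g * quintic_root (b 1) (b 2) (b 3) (1 / g) + g * quintic_root (b 1) (b 2) (b 3) (-1 / g)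
      = 2 * g + (b 2 - 3/4 * b 1^2) / g" .
  have "spread n E = Max S - Min S" unfolding spread_def S_def ..
  then show ?thesis using hi lo roots by linarith
qed

lemma spread_asymptotics:
  assumes win: "\<forall>b1 b2 b3 z. \<bar>b1\<bar> \<le> k \<longrightarrow> \<bar>b2\<bar> \<le> k^2 \<longrightarrow> \<bar>b3\<bar> \<le> k^3 \<longrightarrow> z \<noteq> 0 \<longrightarrow> \<bar>z\<bar> \<le> z0 \<longrightarrow>
      root_window b1 b2 b3 (4 * k^4) D z"
    and z0: "0 < z0" "1 / z0 \<le> g" and big: "80 * k \<le> g"
  shows "\<bar>spread n E - (2 * g + (1 / k) * (- 3 / (4 * k) * (ell1 E L)^2 + ell2 E L) * (1 / g))\<bar>
           \<le> 2 * D / g^3"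
proof -
  have "1 / g \<le> z0" using z0 g_pos by (simp add: field_simps)
  then have "root_window (b 1) (b 2) (b 3) (4 * k^4) D (1 / g)"
    and "root_window (b 1) (b 2) (b 3) (4 * k^4) D (-1 / g)"
    using win abs_b_le[of 1] abs_b_le[of 2] abs_b_le[of 3] g_pos by auto
  moreover have "(b 2 - 3/4 * b 1^2) / g = (1 / k) * (- 3 / (4 * k) * (ell1 E L)^2 + ell2 E L) * (1 / g)"
    unfolding b_def walk_count_1 walk_count_2 using k_ge_1 by (simp add: field_simps power2_eq_square)
  ultimately show ?thesis using spread_approx big by simp
qed

end

section \<open>Asymptotics of the spread\<close>

lemma spread_join_asymptotics:
  fixes K :: nat
  assumes K: "1 \<le> K"
  shows "\<exists>C N. \<forall>n \<ge> N. \<forall>E L. simple_graph n E \<and> L \<subseteq> {0..<n} \<and> card L = K \<and>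
    (\<forall>u\<in>L. \<forall>v\<in>{0..<n} - L. E u v) \<and> (\<forall>u\<in>{0..<n} - L. \<forall>v\<in>{0..<n} - L. \<not> E u v) \<longrightarrow>
    \<bar>spread n E - (2 * sqrt (real K * (real n - real K)) + (1 / real K)
        * (- 3 / (4 * real K) * (ell1 E L)^2 + ell2 E L) * (1 / sqrt (real K * (real n - real K))))\<bar>
      \<le> C / sqrt (real K * (real n - real K)) ^ 3"
proof -
  obtain D z0 where z0: "0 < z0" and win: "\<forall>b1 b2 b3 z. \<bar>b1\<bar> \<le> real K \<longrightarrow> \<bar>b2\<bar> \<le> real K^2 \<longrightarrow>
      \<bar>b3\<bar> \<le> real K^3 \<longrightarrow>
      z \<noteq> 0 \<longrightarrow> \<bar>z\<bar> \<le> z0 \<longrightarrow> root_window b1 b2 b3 (4 * real K^4) D z"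
    using root_window_exists[of "real K" "4 * real K^4"] K by auto
  define G where "G = max (1 / z0) (80 * K)"
  have "\<bar>spread n E - (2 * sqrt (real K * (real n - real K)) + (1 / real K)
        * (- 3 / (4 * real K) * (ell1 E L)^2 + ell2 E L) * (1 / sqrt (real K * (real n - real K))))\<bar>
      \<le> 2 * D / sqrt (real K * (real n - real K)) ^ 3"
    if n: "K + nat \<lceil>G^2\<rceil> + 1 \<le> n" and E: "simple_graph n E" and L: "L \<subseteq> {0..<n}" "card L = K"
      and joined: "\<forall>u\<in>L. \<forall>v\<in>{0..<n} - L. E u v"
      and indep: "\<forall>u\<in>{0..<n} - L. \<forall>v\<in>{0..<n} - L. \<not> E u v" for n E L
  proof -
    have card_I: "card ({0..<n} - L) = n - K"
      using L finite_subset[OF L(1)] by (simp add: card_Diff_subset)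
    interpret join_indep n E L
      using E L joined indep K n card_I by unfold_locales auto
    have k: "k = K" unfolding k_def using L by simp
    have m: "m = real n - K" unfolding m_def I_def card_I using n by simp
    have "G^2 \<le> real (nat \<lceil>G^2\<rceil>)" by (rule real_nat_ceiling_ge)
    then have "G^2 \<le> m" using n unfolding m by linarith
    also have "\<dots> \<le> k * m" using k_ge_1 m_ge_1 by simp
    finally have "sqrt (G^2) \<le> g" unfolding g_def by (rule real_sqrt_le_mono)
    then have "G \<le> g" by (simp add: G_def)
    then have "1 / z0 \<le> g" "80 * k \<le> g" unfolding G_def k by auto
    from spread_asymptotics[OF win[folded k] z0(1) this]
    show ?thesis unfolding g_def k m .
  qed
  then show ?thesis by (intro exI[of _ "2 * D"] exI[of _ "K + nat \<lceil>G^2\<rceil> + 1"]) blast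
qed

theorem lemma4p1:
  fixes r :: nat
  assumes "r \<ge> 3"
  shows "\<exists>C :: real. \<exists>N :: nat. \<forall>n \<ge> N. \<forall>E L.
    simple_graph n E \<and> \<not> has_K_minor n E r \<and>
    (\<forall>E'. simple_graph n E' \<and> \<not> has_K_minor n E' r \<longrightarrow> spread n E' \<le> spread n E) \<and>
    L \<subseteq> {0..<n} \<and> card L = r - 2 \<and>
    (\<forall>u\<in>L. \<forall>v\<in>{0..<n} - L. E u v) \<and>
    (\<forall>u\<in>{0..<n} - L. \<forall>v\<in>{0..<n} - L. \<not> E u v)
    \<longrightarrow> \<bar>spread n E - (2 * gamma_nr n r
           + (1 / (real r - 2)) * (- 3 / (4 * (real r - 2)) * (ell1 E L)\<^sup>2 + ell2 E L)
             * (1 / gamma_nr n r))\<bar>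
        \<le> C / (gamma_nr n r) ^ 3"
proof -
  have K: "1 \<le> r - 2" and real_K: "real (r - 2) = real r - 2" using assms by auto
  have gamma: "gamma_nr n r = sqrt ((real r - 2) * (real n - (real r - 2)))" for n
    unfolding gamma_nr_def by (simp add: algebra_simps)
  show ?thesis
    unfolding gamma using spread_join_asymptotics[OF K, unfolded real_K] by blast
qed

end
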